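(* Let $a<b$ and let $f:[a,b]\to\mathbb{R}$ be continuous. Define $$I_f(a,x)=\frac{1}{x-a}\int_a^x f(t)\,\mathrm{d}t\ (a<x\le b),\quad B_f(a,b)=\frac{b-a}{2}\,I_f(a,b),\quad J_f(a,b)=b\,I_f(a,b)-\frac{1}{b-a}\int_a^b t\,f(t)\,\mathrm{d}t.$$ Then there exists $\eta\in(a,b)$ such that $$f(\eta)=I_f(a,\eta)+\frac{6\,[B_f(a,b)-J_f(a,b)]}{(b-a)^2}(\eta-a).$$ *)

theory Defs
  imports "HOL-Analysis.Analysis"
begin

definition int_mean :: "(real \<Rightarrow> real) \<Rightarrow> real \<Rightarrow> real \<Rightarrow> real" where
  "int_mean f a x = (1 / (x - a)) * integral {a..x} f"

definition B_f :: "(real \<Rightarrow> real) \<Rightarrow> real \<Rightarrow> real \<Rightarrow> real" where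
  "B_f f a b = ((b - a) / 2) * int_mean f a b"

definition J_f :: "(real \<Rightarrow> real) \<Rightarrow> real \<Rightarrow> real \<Rightarrow> real" where
  "J_f f a b = b * int_mean f a b - (1 / (b - a)) * integral {a..b} (\<lambda>t. t * f t)"

end

theory Submission
  imports Defs
begin

text \<open>Write \<open>F x = \<integral>\<^sub>a\<^sup>x f\<close> and \<open>H x = \<integral>\<^sub>a\<^sup>x t f t dt\<close>. The function
  \<open>\<phi> x = 2 H x - (x + a) F x\<close> vanishes at \<open>a\<close> and has derivative
  \<open>(x - a) f x - F x = (x - a) (f x - I\<^sub>f(a,x))\<close>. Moreover \<open>\<phi> b = 2 (b - a) (B\<^sub>f - J\<^sub>f)\<close>,
  so with \<open>C = 6 (B\<^sub>f - J\<^sub>f) / (b - a)\<^sup>2\<close> the function \<open>\<phi> x - C (x - a)\<^sup>3 / 3\<close> vanishes at both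
  endpoints, and Rolle's theorem yields an \<open>\<eta>\<close> with \<open>(\<eta> - a) f \<eta> = F \<eta> + C (\<eta> - a)\<^sup>2\<close>.\<close>

lemma first_moment_difference_has_derivative:
  fixes f :: "real \<Rightarrow> real"
  assumes f: "continuous_on {a..b} f" and x: "x \<in> {a..b}"
  shows "((\<lambda>x. 2 * integral {a..x} (\<lambda>t. t * f t) - (x + a) * integral {a..x} f)
           has_real_derivative (x - a) * f x - integral {a..x} f) (at x within {a..b})"
proof -
  have tf: "continuous_on {a..b} (\<lambda>t. t * f t)"
    using f by (intro continuous_intros)
  show ?thesis
    by (rule derivative_eq_intros integral_has_real_derivative[OF f x]
          integral_has_real_derivative[OF tf x] refl | simp add: algebra_simps)+
qed

lemma B_f_minus_J_f:
  fixes f :: "real \<Rightarrow> real"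
  assumes "a \<noteq> b"
  shows "B_f f a b - J_f f a b
    = (2 * integral {a..b} (\<lambda>t. t * f t) - (a + b) * integral {a..b} f) / (2 * (b - a))"
proof -
  have "b - a \<noteq> 0"
    using assms by simp
  then show ?thesis
    by (simp add: B_f_def J_f_def int_mean_def divide_simps) (simp add: algebra_simps)
qed

lemma integral_mean_plus_linear_mean_value:
  fixes f :: "real \<Rightarrow> real"
  assumes "a < b" and f: "continuous_on {a..b} f"
    and C: "C * (b - a)^3 / 3 = 2 * integral {a..b} (\<lambda>t. t * f t) - (a + b) * integral {a..b} f"
  shows "\<exists>\<eta>\<in>{a<..<b}. f \<eta> = int_mean f a \<eta> + C * (\<eta> - a)"
proof -
  define F where "F x = integral {a..x} f" for x
  define \<phi> where "\<phi> x = 2 * integral {a..x} (\<lambda>t. t * f t) - (x + a) * F x - C * (x - a)^3 / 3"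
    for x
  define \<phi>' where "\<phi>' x = (x - a) * f x - F x - C * (x - a)^2" for x
  have deriv: "(\<phi> has_real_derivative \<phi>' x) (at x within {a..b})" if "x \<in> {a..b}" for x
    unfolding \<phi>_def[abs_def] \<phi>'_def F_def
    by (rule derivative_eq_intros first_moment_difference_has_derivative[OF f that] refl
          | simp add: power2_eq_square)+
  have "\<phi> a = \<phi> b"
    using C by (simp add: \<phi>_def F_def)
  then obtain \<eta> where \<eta>: "a < \<eta>" "\<eta> < b" and "(\<lambda>v. \<phi>' \<eta> * v) = (\<lambda>v. 0)"
  proof (atomize_elim, rule Rolle_deriv[OF \<open>a < b\<close> _ DERIV_continuous_on[OF deriv]])
    fix x assume "a < x" "x < b"
    then show "(\<phi> has_derivative (\<lambda>v. \<phi>' x * v)) (at x)"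
      using deriv[of x] at_within_Icc_at[of a x b] by (simp add: has_field_derivative_def)
  qed
  then have "\<phi>' \<eta> = 0"
    by (metis mult.right_neutral)
  then have "f \<eta> = F \<eta> / (\<eta> - a) + C * (\<eta> - a)"
    using \<eta> by (simp add: \<phi>'_def field_simps power2_eq_square)
  then show ?thesis
    using \<eta> by (auto simp: int_mean_def F_def)
qed

theorem mainTheorem8:
  fixes f :: "real \<Rightarrow> real" and a b :: real
  assumes "a < b" and "continuous_on {a..b} f"
  shows "\<exists>\<eta>\<in>{a<..<b}. f \<eta> = int_mean f a \<eta>
           + (6 * (B_f f a b - J_f f a b) / (b - a)^2) * (\<eta> - a)"
proof (rule integral_mean_plus_linear_mean_value[OF assms])
  have "b - a \<noteq> 0"
    using assms(1) by simp
  then have "6 * (B_f f a b - J_f f a b) / (b - a)^2 * (b - a)^3 / 3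
      = 2 * (b - a) * (B_f f a b - J_f f a b)"
    by (simp add: divide_simps power2_eq_square power3_eq_cube) (simp add: algebra_simps)
  also have "\<dots> = 2 * integral {a..b} (\<lambda>t. t * f t) - (a + b) * integral {a..b} f"
    using \<open>b - a \<noteq> 0\<close> by (simp add: B_f_minus_J_f)
  finally show "6 * (B_f f a b - J_f f a b) / (b - a)^2 * (b - a)^3 / 3
      = 2 * integral {a..b} (\<lambda>t. t * f t) - (a + b) * integral {a..b} f" .
qed

end
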